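(* Let $(G,I,O)$ be a geometry with $n = \lvert V(G)\rvert$ and $k = \lvert O \rvert$. If $(G,I,O)$ has a causal flow, then $\lvert E(G)\rvert \le kn - \binom{k+1}{2}$. Moreover, for any $n \ge k \ge 1$ and any integer partition $n_1 \le n_2 \le \cdots \le n_k$ of $n$ into positive parts, the geometry $(G,I,O)$ with $G = G(n_1,\ldots,n_k)$, $I = \{v_{i,1}\}_{i=1}^k$ and $O = \{v_{i,n_i}\}_{i=1}^k$ has a causal flow and satisfies $\lvert E(G)\rvert = kn - \binom{k+1}{2}$.
   Context: A geometry is a triple $(G,I,O)$ where $G$ is a finite simple undirected graph and $I, O \subseteq V(G)$ (not necessarily disjoint). Write $O^{\mathsf c} = V(G)\setminus O$, $I^{\mathsf c} = V(G) \setminus I$, and $x \sim y$ for adjacency in $G$. A causal flow on $(G,I,O)$ is a pair $(f,\preceq)$ with a function $f: O^{\mathsf c} \to I^{\mathsf c}$ and a partial order $\preceq$ on $V(G)$ such that for all $x \in O^{\mathsf c}$ and $y \in V(G)$: (1) $x \sim f(x)$; (2) $x \preceq f(x)$; (3) if $y \sim f(x)$ then $x \preceq y$. The graph $G(n_1,\ldots,n_k)$: for each $1 \le i \le k$ it contains a path $v_{i,1} v_{i,2} \cdots v_{i,n_i}$ on $n_i$ new vertices (edges $v_{i,a}v_{i,a+1}$ for $1 \le a < n_i$), and additionally, for each $1 \le i < j \le k$, the following edges: (i) if $n_i > 1$, the edge $v_{i,a}v_{j,a}$ for each $1 \le a < n_i$; (ii) if $n_j > 1$, the edge $v_{i,a+1}v_{j,a}$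 for each $1 \le a < n_i$; (iii) the edge $v_{i,n_i}v_{j,a}$ for each $n_i \le a \le n_j$. *)

theory Defs
  imports Main
begin

definition simple_graph :: "'a set \<Rightarrow> 'a rel \<Rightarrow> bool" where
  "simple_graph V E \<longleftrightarrow> finite V \<and> E \<subseteq> V \<times> V \<and> sym E \<and> (\<forall>x. (x, x) \<notin> E)"

definition edge_set :: "'a rel \<Rightarrow> 'a set set" where
  "edge_set E = {{x, y} | x y. (x, y) \<in> E}"

definition geometry :: "'a set \<Rightarrow> 'a rel \<Rightarrow> 'a set \<Rightarrow> 'a set \<Rightarrow> bool" where
  "geometry V E Inp Out \<longleftrightarrow> simple_graph V E \<and> Inp \<subseteq> V \<and> Out \<subseteq> V"

definition is_causal_flow ::
  "'a set \<Rightarrow> 'a rel \<Rightarrow> 'a set \<Rightarrow> 'a set \<Rightarrow> ('a \<Rightarrow> 'a) \<Rightarrow> 'a rel \<Rightarrow> bool" where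
  "is_causal_flow V E Inp Out f R \<longleftrightarrow>
     partial_order_on V R \<and>
     (\<forall>x \<in> V - Out. f x \<in> V - Inp) \<and>
     (\<forall>x \<in> V - Out. \<forall>y \<in> V.
        (x, f x) \<in> E \<and> (x, f x) \<in> R \<and> ((y, f x) \<in> E \<longrightarrow> (x, y) \<in> R))"

definition has_causal_flow :: "'a set \<Rightarrow> 'a rel \<Rightarrow> 'a set \<Rightarrow> 'a set \<Rightarrow> bool" where
  "has_causal_flow V E Inp Out \<longleftrightarrow> (\<exists>f R. is_causal_flow V E Inp Out f R)"

text \<open>The graph G(n_1,...,n_k): vertex v_{i,a} is the pair (i,a), 1 \<le> i \<le> k, 1 \<le> a \<le> n i.\<close>
definition gn_vertices :: "nat \<Rightarrow> (nat \<Rightarrow> nat) \<Rightarrow> (nat \<times> nat) set" where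
  "gn_vertices k n = {(i, a). 1 \<le> i \<and> i \<le> k \<and> 1 \<le> a \<and> a \<le> n i}"

text \<open>The listed edges, each as an ordered pair (one orientation).\<close>
definition gn_dir :: "nat \<Rightarrow> (nat \<Rightarrow> nat) \<Rightarrow> ((nat \<times> nat) \<times> (nat \<times> nat)) set" where
  "gn_dir k n =
     {((i, a), (i, a + 1)) | i a. 1 \<le> i \<and> i \<le> k \<and> 1 \<le> a \<and> a < n i}
   \<union> {((i, a), (j, a)) | i j a. 1 \<le> i \<and> i < j \<and> j \<le> k \<and> n i > 1 \<and> 1 \<le> a \<and> a < n i}
   \<union> {((i, a + 1), (j, a)) | i j a. 1 \<le> i \<and> i < j \<and> j \<le> k \<and> n j > 1 \<and> 1 \<le> a \<and> a < n i}
   \<union> {((i, n i), (j, a)) | i j a. 1 \<le> i \<and> i < j \<and> j \<le> k \<and> n i \<le> a \<and> a \<le> n j}"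

definition gn_adj :: "nat \<Rightarrow> (nat \<Rightarrow> nat) \<Rightarrow> ((nat \<times> nat) \<times> (nat \<times> nat)) set" where
  "gn_adj k n = gn_dir k n \<union> (gn_dir k n)\<inverse>"

definition gn_inputs :: "nat \<Rightarrow> (nat \<times> nat) set" where
  "gn_inputs k = {(i, 1) | i. 1 \<le> i \<and> i \<le> k}"

definition gn_outputs :: "nat \<Rightarrow> (nat \<Rightarrow> nat) \<Rightarrow> (nat \<times> nat) set" where
  "gn_outputs k n = {(i, n i) | i. 1 \<le> i \<and> i \<le> k}"

end

theory Submission
  imports Defs "HOL-Library.Product_Lexorder"
begin

text \<open>A vertex \<open>x\<close> that is minimal in the causal order is not of the form \<open>f z\<close>, because
  \<open>z \<preceq> f z\<close>; so deleting \<open>x\<close> leaves a causal flow on the remaining vertices, and the bound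
  follows by induction on \<open>n\<close> once \<open>x\<close> is shown to have few neighbours. An output \<open>x\<close> has at
  most \<open>n - 1\<close> of them. For a non-output \<open>x\<close>, every neighbour \<open>f z\<close> satisfies \<open>z \<preceq> x\<close>, hence
  \<open>z = x\<close>; so all neighbours except \<open>f x\<close> lie outside the image of the injective map \<open>f\<close>,
  a set of \<open>k\<close> vertices that contains \<open>x\<close> itself, and \<open>x\<close> has at most \<open>k\<close> neighbours.

  In \<open>G(n\<^sub>1,\<dots>,n\<^sub>k)\<close> the map \<open>v\<^sub>i\<^sub>,\<^sub>a \<mapsto> v\<^sub>i\<^sub>,\<^sub>a\<^sub>+\<^sub>1\<close> is a causal flow, and counting the edges
  column by column gives \<open>n\<^sub>j - 1\<close> path edges plus \<open>n\<^sub>i + n\<^sub>j - 1\<close> edges to each column \<open>i < j\<close>,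
  which sums to \<open>kn - (k+1 choose 2)\<close>.\<close>

section \<open>The edge bound\<close>

lemma edge_set_eq_image: "edge_set E = (\<lambda>(x, y). {x, y}) ` E"
  unfolding edge_set_def by auto

lemma card_edge_set_le_delete_vertex:
  assumes "finite E" "sym E"
  shows "card (edge_set E) \<le> card (edge_set (Restr E (- {x}))) + card {y. (x, y) \<in> E}"
proof -
  let ?E' = "Restr E (- {x})" and ?N = "{y. (x, y) \<in> E}"
  have "edge_set E \<subseteq> edge_set ?E' \<union> (\<lambda>y. {x, y}) ` ?N"
  proof
    fix e assume "e \<in> edge_set E"
    then obtain u v where e: "e = {u, v}" "(u, v) \<in> E"
      unfolding edge_set_def by blast
    have "(v, u) \<in> E"
      using \<open>sym E\<close> e(2) by (rule symD)
    then show "e \<in> edge_set ?E' \<union> (\<lambda>y. {x, y}) ` ?N"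
      using e unfolding edge_set_def by (cases "u = x \<or> v = x") (auto simp: insert_commute)
  qed
  moreover have "finite ?N"
    using \<open>finite E\<close> finite_subset[of ?N "snd ` E"] by force
  moreover have "finite (edge_set ?E')"
    using \<open>finite E\<close> by (simp add: edge_set_eq_image)
  ultimately have "card (edge_set E) \<le> card (edge_set ?E' \<union> (\<lambda>y. {x, y}) ` ?N)"
    by (intro card_mono) auto
  also have "\<dots> \<le> card (edge_set ?E') + card ((\<lambda>y. {x, y}) ` ?N)"
    by (rule card_Un_le)
  also have "\<dots> \<le> card (edge_set ?E') + card ?N"
    by (simp add: card_image_le \<open>finite ?N\<close>)
  finally show ?thesis .
qed

locale flow_graph =
  fixes V :: "'a set" and E :: "'a rel" and Out :: "'a set" and f :: "'a \<Rightarrow> 'a" and R :: "'a rel"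
  assumes finite_V: "finite V"
    and E_subset: "E \<subseteq> V \<times> V" and sym_E: "sym E" and irrefl_E: "(x, x) \<notin> E"
    and Out_subset: "Out \<subseteq> V" and trans_R: "trans R" and antisym_R: "antisym R"
    and flow_edge: "x \<in> V - Out \<Longrightarrow> (x, f x) \<in> E"
    and flow_order: "x \<in> V - Out \<Longrightarrow> (x, f x) \<in> R"
    and flow_causal: "x \<in> V - Out \<Longrightarrow> (y, f x) \<in> E \<Longrightarrow> (x, y) \<in> R"

lemma causal_flow_imp_flow_graph:
  assumes "geometry V E Inp Out" "is_causal_flow V E Inp Out f R"
  shows "flow_graph V E Out f R"
  using assms unfolding geometry_def simple_graph_def is_causal_flow_def partial_order_on_def
    preorder_on_def flow_graph_def by blast

context flow_graph
begin

lemma flow_in_V: "x \<in> V - Out \<Longrightarrow> f x \<in> V"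
  using flow_edge E_subset by blast

lemma inj_on_flow: "inj_on f (V - Out)"
proof (rule inj_onI)
  fix a b assume ab: "a \<in> V - Out" "b \<in> V - Out" "f a = f b"
  then have "(a, b) \<in> R" "(b, a) \<in> R"
    using flow_causal flow_edge by metis+
  then show "a = b"
    by (rule antisymD[OF antisym_R])
qed

lemma card_diff_flow_image: "card (V - f ` (V - Out)) = card Out"
proof -
  have "f ` (V - Out) \<subseteq> V"
    using flow_in_V by blast
  moreover have "card (f ` (V - Out)) = card V - card Out"
    using inj_on_flow Out_subset finite_V by (simp add: card_image card_Diff_subset finite_subset)
  ultimately show ?thesis
    using finite_V Out_subset by (simp add: card_Diff_subset card_mono finite_subset)
qed

lemma obtain_minimal:
  assumes "V \<noteq> {}"
  obtains x where "x \<in> V" "\<And>z. z \<in> V \<Longrightarrow> (z, x) \<in> R \<Longrightarrow> z = x"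
  using Finite_Set.bex_min_element[of V "\<lambda>x y. (x, y) \<in> R \<and> x \<noteq> y"] finite_V assms
    trans_R antisym_R
  unfolding asymp_on_def transp_on_def antisym_def trans_def by blast

context
  fixes x assumes minimal: "x \<in> V" "\<And>z. z \<in> V \<Longrightarrow> (z, x) \<in> R \<Longrightarrow> z = x"
begin

lemma minimal_notin_image: "x \<notin> f ` (V - Out)"
  using minimal flow_order flow_edge irrefl_E by fastforce

lemma flow_graph_delete_minimal:
  "flow_graph (V - {x}) (Restr E (- {x})) (Out - {x}) f R"
proof -
  have "f y \<noteq> x" if "y \<in> V - Out" for y
    using minimal_notin_image that by blast
  then show ?thesis
    using finite_V E_subset sym_E irrefl_E Out_subset trans_R antisym_R
      flow_edge flow_order flow_causal
    unfolding flow_graph_def sym_def by auto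
qed

lemma degree_minimal_le_card_Out:
  assumes "x \<notin> Out"
  shows "card {y. (x, y) \<in> E} \<le> card Out"
proof -
  let ?M = "V - f ` (V - Out)"
  have "{y. (x, y) \<in> E} \<subseteq> insert (f x) (?M - {x})"
  proof
    fix y assume "y \<in> {y. (x, y) \<in> E}"
    then have y: "(x, y) \<in> E" "y \<in> V" "y \<noteq> x"
      using E_subset irrefl_E by auto
    have "y = f x" if "y = f z" "z \<in> V - Out" for z
      using that y minimal flow_causal[of z x] sym_E by (auto dest: symD)
    then show "y \<in> insert (f x) (?M - {x})"
      using y by blast
  qed
  moreover have "x \<in> ?M"
    using minimal minimal_notin_image by blast
  ultimately have "card {y. (x, y) \<in> E} \<le> card (insert (f x) (?M - {x}))"
    using finite_V by (intro card_mono) auto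
  also have "\<dots> \<le> Suc (card (?M - {x}))"
    using finite_V by (simp add: card_insert_if)
  also have "\<dots> = card ?M"
    using \<open>x \<in> ?M\<close> finite_V by (intro card_Suc_Diff1) auto
  finally show ?thesis
    using card_diff_flow_image by simp
qed

end

end

lemma edge_bound_Suc:
  "int (Suc k) * int (Suc n) - int (Suc (Suc k) choose 2) = int k * int n - int (Suc k choose 2) + int n"
  by (simp add: numeral_2_eq_2 algebra_simps)

lemma flow_graph_edge_bound:
  "flow_graph V E Out f R \<Longrightarrow>
    int (card (edge_set E)) \<le> int (card Out) * int (card V) - int (Suc (card Out) choose 2)"
proof (induction "card V" arbitrary: V E Out)
  case 0
  then interpret flow_graph V E Out f R by simp
  have "V = {}"
    using 0 finite_V by simp
  then show ?case
    using E_subset Out_subset by (simp add: edge_set_def)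
next
  case (Suc n)
  interpret flow_graph V E Out f R by fact
  have "V \<noteq> {}"
    using Suc.hyps(2) by auto
  then obtain x where x: "x \<in> V" "\<And>z. z \<in> V \<Longrightarrow> (z, x) \<in> R \<Longrightarrow> z = x"
    using obtain_minimal by blast
  let ?E' = "Restr E (- {x})"
  have card_V: "card V = Suc (card (V - {x}))"
    using card_Suc_Diff1[OF finite_V x(1)] by simp
  have IH: "int (card (edge_set ?E')) \<le>
      int (card (Out - {x})) * int (card (V - {x})) - int (Suc (card (Out - {x})) choose 2)"
    using Suc.hyps card_V by (intro Suc.hyps(1) flow_graph_delete_minimal[OF x]) simp
  have edges: "card (edge_set E) \<le> card (edge_set ?E') + card {y. (x, y) \<in> E}"
    using finite_subset[OF E_subset] finite_V sym_E by (intro card_edge_set_le_delete_vertex) auto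
  show ?case
  proof (cases "x \<in> Out")
    case True
    have card_Out: "card Out = Suc (card (Out - {x}))"
      using card_Suc_Diff1[OF finite_subset[OF Out_subset finite_V] True] by simp
    have "card {y. (x, y) \<in> E} \<le> card (V - {x})"
      using E_subset irrefl_E finite_V by (intro card_mono) auto
    then show ?thesis
      using IH edges unfolding card_V card_Out edge_bound_Suc by linarith
  next
    case False
    then have "Out - {x} = Out"
      by simp
    then show ?thesis
      using IH edges degree_minimal_le_card_Out[OF x False] unfolding card_V
      by (simp add: algebra_simps)
  qed
qed


section \<open>The extremal graphs\<close>

lemma card_edge_set_orientation:
  fixes D :: "'a::linorder rel"
  assumes "\<And>u v. (u, v) \<in> D \<Longrightarrow> u < v"
  shows "card (edge_set (D \<union> D\<inverse>)) = card D"
proof -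
  have "edge_set (D \<union> D\<inverse>) = (\<lambda>(u, v). {u, v}) ` D"
    unfolding edge_set_eq_image by (auto simp: insert_commute)
  moreover have "inj_on (\<lambda>(u, v). {u, v}) D"
  proof (rule inj_onI, clarify)
    fix a b c d assume "(a, b) \<in> D" "(c, d) \<in> D" "{a, b} = {c, d}"
    then show "a = c \<and> b = d"
      using assms[of a b] assms[of c d] by (auto simp: doubleton_eq_iff)
  qed
  ultimately show ?thesis
    by (simp add: card_image)
qed

lemma gn_dir_increasing: "(u, v) \<in> gn_dir k p \<Longrightarrow> u < v"
  unfolding gn_dir_def by auto

lemma card_edge_set_gn_adj: "card (edge_set (gn_adj k p)) = card (gn_dir k p)"
  unfolding gn_adj_def using gn_dir_increasing by (rule card_edge_set_orientation)

definition column_edges :: "nat \<Rightarrow> (nat \<Rightarrow> nat) \<Rightarrow> ((nat \<times> nat) \<times> (nat \<times> nat)) set" where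
  "column_edges j p = (\<lambda>a. ((j, a), (j, a + 1))) ` {1..<p j}"

definition cross_edges :: "nat \<Rightarrow> nat \<Rightarrow> (nat \<Rightarrow> nat) \<Rightarrow> ((nat \<times> nat) \<times> (nat \<times> nat)) set" where
  "cross_edges i j p =
     (\<lambda>a. ((i, a), (j, a))) ` {1..<p i} \<union> (\<lambda>a. ((i, a + 1), (j, a))) ` {1..<p i}
     \<union> (\<lambda>a. ((i, p i), (j, a))) ` {p i..p j}"

lemma gn_dir_cases:
  assumes "e \<in> gn_dir k p"
  obtains
      (column) i a where "e = ((i, a), (i, a + 1))" "1 \<le> i" "i \<le> k" "1 \<le> a" "a < p i"
    | (level) i j a where "e = ((i, a), (j, a))" "1 \<le> i" "i < j" "j \<le> k" "1 \<le> a" "a < p i"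
    | (diagonal) i j a where "e = ((i, a + 1), (j, a))" "1 \<le> i" "i < j" "j \<le> k" "p j > 1"
        "1 \<le> a" "a < p i"
    | (top) i j a where "e = ((i, p i), (j, a))" "1 \<le> i" "i < j" "j \<le> k" "p i \<le> a" "a \<le> p j"
  using assms unfolding gn_dir_def by blast

lemma gn_dir_eq_UN:
  assumes "mono_on {1..k} p"
  shows "gn_dir k p = (\<Union>j\<in>{1..k}. column_edges j p \<union> (\<Union>i\<in>{1..<j}. cross_edges i j p))"
    (is "_ = ?U")
proof
  show "gn_dir k p \<subseteq> ?U"
  proof
    fix e assume "e \<in> gn_dir k p"
    then show "e \<in> ?U"
    proof (cases rule: gn_dir_cases)
      case (column i a)
      then show ?thesis unfolding column_edges_def by force
    next
      case (level i j a)
      then show ?thesis unfolding cross_edges_def by force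
    next
      case (diagonal i j a)
      then show ?thesis unfolding cross_edges_def by force
    next
      case (top i j a)
      then show ?thesis unfolding cross_edges_def by force
    qed
  qed
next
  have "p j > 1" if "1 \<le> i" "i < j" "j \<le> k" "p i > 1" for i j
    using assms that less_le_trans[of 1 "p i" "p j"] unfolding mono_on_def by auto
  then show "?U \<subseteq> gn_dir k p"
    unfolding gn_dir_def column_edges_def cross_edges_def by auto
qed

lemma card_column_edges: "card (column_edges j p) = p j - 1"
  unfolding column_edges_def by (subst card_image) (auto simp: inj_on_def)

lemma card_cross_edges:
  assumes "1 \<le> p i" "p i \<le> p j"
  shows "card (cross_edges i j p) = p i + p j - 1"
proof -
  let ?A = "(\<lambda>a. ((i, a), (j, a))) ` {1..<p i}"
  let ?B = "(\<lambda>a. ((i, a + 1), (j, a))) ` {1..<p i}"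
  let ?C = "(\<lambda>a. ((i, p i), (j, a))) ` {p i..p j}"
  have "card (cross_edges i j p) = card ?A + card ?B + card ?C"
    unfolding cross_edges_def by (subst card_Un_disjoint, auto)+
  also have "\<dots> = (p i - 1) + (p i - 1) + (p j + 1 - p i)"
    by (subst (1 2 3) card_image) (auto simp: inj_on_def)
  finally show ?thesis
    using assms by simp
qed

lemma card_gn_dir:
  assumes "mono_on {1..k} p" "\<And>i. i \<in> {1..k} \<Longrightarrow> 1 \<le> p i"
  shows "card (gn_dir k p) = (\<Sum>j=1..k. (p j - 1) + (\<Sum>i=1..<j. p i + p j - 1))"
proof -
  have finite_cross: "finite (cross_edges i j p)" for i j
    unfolding cross_edges_def by simp
  have "card (column_edges j p \<union> (\<Union>i\<in>{1..<j}. cross_edges i j p)) = (p j - 1) + (\<Sum>i=1..<j. p i + p j - 1)"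
    if "j \<in> {1..k}" for j
  proof -
    have "card (\<Union>i\<in>{1..<j}. cross_edges i j p) = (\<Sum>i=1..<j. card (cross_edges i j p))"
      using finite_cross by (intro card_UN_disjoint) (auto simp: cross_edges_def)
    also have "\<dots> = (\<Sum>i=1..<j. p i + p j - 1)"
      using assms that by (intro sum.cong card_cross_edges) (auto simp: mono_on_def)
    finally show ?thesis
      using finite_cross card_column_edges
      by (subst card_Un_disjoint) (auto simp: column_edges_def cross_edges_def)
  qed
  then show ?thesis
    unfolding gn_dir_eq_UN[OF assms(1)] using finite_cross
    by (subst card_UN_disjoint) (auto simp: column_edges_def cross_edges_def)
qed

lemma sum_gn_edge_counts:
  assumes "\<And>i. i \<in> {1..k} \<Longrightarrow> 1 \<le> p i"
  shows "int (\<Sum>j=1..k. (p j - 1) + (\<Sum>i=1..<j. p i + p j - 1))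
    = int k * int (\<Sum>i=1..k. p i) - int (Suc k choose 2)"
  using assms
proof (induction k)
  case 0
  then show ?case by simp
next
  case (Suc k)
  let ?T = "\<lambda>j. (p j - 1) + (\<Sum>i=1..<j. p i + p j - 1)"
  have IH: "int (\<Sum>j=1..k. ?T j) = int k * int (\<Sum>i=1..k. p i) - int (Suc k choose 2)"
    using Suc by simp
  have "int (\<Sum>i=1..<Suc k. p i + p (Suc k) - 1) = (\<Sum>i=1..k. int (p i) + int (p (Suc k)) - 1)"
    unfolding of_nat_sum atLeastLessThanSuc_atLeastAtMost
  proof (intro sum.cong refl)
    fix i assume "i \<in> {1..k}"
    then have "1 \<le> p i"
      using Suc.prems by simp
    then show "int (p i + p (Suc k) - 1) = int (p i) + int (p (Suc k)) - 1"
      by (simp add: of_nat_diff)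
  qed
  also have "\<dots> = int (\<Sum>i=1..k. p i) + int k * int (p (Suc k)) - int k"
    by (simp add: sum.distrib sum_subtractf)
  finally have cross: "int (\<Sum>i=1..<Suc k. p i + p (Suc k) - 1)
      = int (\<Sum>i=1..k. p i) + int k * int (p (Suc k)) - int k" .
  have column: "int (p (Suc k) - 1) = int (p (Suc k)) - 1"
    using Suc.prems by (simp add: of_nat_diff)
  have "int (\<Sum>j=1..Suc k. ?T j) = int (\<Sum>j=1..k. ?T j) + int (p (Suc k) - 1)
      + int (\<Sum>i=1..<Suc k. p i + p (Suc k) - 1)"
    by (subst sum.cl_ivl_Suc) simp
  also have "\<dots> = int (Suc k) * int (\<Sum>i=1..Suc k. p i) - int (Suc (Suc k) choose 2)"
    unfolding IH column cross by (simp add: numeral_2_eq_2 algebra_simps)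
  finally show ?case .
qed

lemma gn_dir_subset:
  assumes "mono_on {1..k} p" "\<And>i. i \<in> {1..k} \<Longrightarrow> 1 \<le> p i"
  shows "gn_dir k p \<subseteq> gn_vertices k p \<times> gn_vertices k p"
proof -
  have "cross_edges i j p \<subseteq> gn_vertices k p \<times> gn_vertices k p" if "1 \<le> i" "i < j" "j \<le> k" for i j
  proof -
    have "1 \<le> p i" "p i \<le> p j"
      using assms that unfolding mono_on_def by auto
    then show ?thesis
      using that unfolding cross_edges_def gn_vertices_def by auto
  qed
  moreover have "column_edges j p \<subseteq> gn_vertices k p \<times> gn_vertices k p" if "j \<in> {1..k}" for j
    using that unfolding column_edges_def gn_vertices_def by auto
  ultimately show ?thesis
    unfolding gn_dir_eq_UN[OF assms(1)] by fastforce
qed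

lemma gn_geometry:
  assumes "mono_on {1..k} p" "\<And>i. i \<in> {1..k} \<Longrightarrow> 1 \<le> p i"
  shows "geometry (gn_vertices k p) (gn_adj k p) (gn_inputs k) (gn_outputs k p)"
proof -
  have "gn_vertices k p = Sigma {1..k} (\<lambda>i. {1..p i})"
    unfolding gn_vertices_def by auto
  then have "finite (gn_vertices k p)"
    by simp
  moreover have "gn_adj k p \<subseteq> gn_vertices k p \<times> gn_vertices k p"
    using gn_dir_subset[OF assms] unfolding gn_adj_def by auto
  moreover have "sym (gn_adj k p)"
    unfolding gn_adj_def sym_def by auto
  moreover have "(x, x) \<notin> gn_adj k p" for x
    unfolding gn_adj_def using gn_dir_increasing by blast
  moreover have "gn_inputs k \<subseteq> gn_vertices k p" "gn_outputs k p \<subseteq> gn_vertices k p"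
    using assms(2) unfolding gn_inputs_def gn_outputs_def gn_vertices_def by auto
  ultimately show ?thesis
    unfolding geometry_def simple_graph_def by blast
qed

lemma partial_order_on_rank:
  fixes g :: "'a \<Rightarrow> 'b::linorder"
  assumes "inj_on g A"
  shows "partial_order_on A {(u, v). u \<in> A \<and> v \<in> A \<and> g u \<le> g v}"
  using assms
  unfolding partial_order_on_def preorder_on_def refl_on_def trans_def antisym_def
  by (auto dest: inj_onD)

text \<open>Lexicographic ranks: the non-outputs \<open>v\<^sub>i\<^sub>,\<^sub>a\<close> are ordered by row \<open>a\<close>, then by column \<open>i\<close>,
  and the outputs come last.\<close>
definition gn_rank :: "(nat \<Rightarrow> nat) \<Rightarrow> nat \<times> nat \<Rightarrow> bool \<times> nat \<times> nat" where
  "gn_rank p = (\<lambda>(i, a). (a = p i, a, i))"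

definition gn_order :: "nat \<Rightarrow> (nat \<Rightarrow> nat) \<Rightarrow> ((nat \<times> nat) \<times> (nat \<times> nat)) set" where
  "gn_order k p = {(u, v). u \<in> gn_vertices k p \<and> v \<in> gn_vertices k p \<and> gn_rank p u \<le> gn_rank p v}"

lemma partial_order_on_gn_order: "partial_order_on (gn_vertices k p) (gn_order k p)"
  unfolding gn_order_def by (rule partial_order_on_rank) (auto simp: inj_on_def gn_rank_def)

lemma gn_adj_succ_rank:
  assumes "(y, (i, a + 1)) \<in> gn_adj k p" "y \<in> gn_vertices k p" "a < p i"
  shows "y = (i, a) \<or> gn_rank p (i, a) < gn_rank p y"
  using assms unfolding gn_adj_def gn_dir_def gn_vertices_def gn_rank_def by auto

lemma gn_non_output_cases:
  assumes "x \<in> gn_vertices k p - gn_outputs k p"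
  obtains i a where "x = (i, a)" "1 \<le> i" "i \<le> k" "1 \<le> a" "a < p i"
  using assms unfolding gn_vertices_def gn_outputs_def by force

lemma gn_causal_flow:
  "is_causal_flow (gn_vertices k p) (gn_adj k p) (gn_inputs k) (gn_outputs k p)
    (\<lambda>(i, a). (i, a + 1)) (gn_order k p)"
proof -
  let ?f = "\<lambda>(i, a). (i, a + 1 :: nat)"
  have "?f x \<in> gn_vertices k p - gn_inputs k" if "x \<in> gn_vertices k p - gn_outputs k p" for x
    using that by (cases rule: gn_non_output_cases) (auto simp: gn_vertices_def gn_inputs_def)
  moreover have "(x, ?f x) \<in> gn_adj k p \<and> (x, ?f x) \<in> gn_order k p \<and>
      ((y, ?f x) \<in> gn_adj k p \<longrightarrow> (x, y) \<in> gn_order k p)"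
    if x: "x \<in> gn_vertices k p - gn_outputs k p" and y: "y \<in> gn_vertices k p" for x y
    using x
  proof (cases rule: gn_non_output_cases)
    case (1 i a)
    then have succ: "?f x = (i, a + 1)" "?f x \<in> gn_vertices k p"
      unfolding gn_vertices_def by auto
    have "(x, ?f x) \<in> gn_adj k p"
      using 1 unfolding gn_adj_def gn_dir_def by auto
    moreover have "(x, ?f x) \<in> gn_order k p"
      using 1 x succ unfolding gn_order_def gn_rank_def by auto
    moreover have "(x, y) \<in> gn_order k p" if "(y, ?f x) \<in> gn_adj k p"
      using gn_adj_succ_rank[of y i a k p] that 1 x y succ(1)
      unfolding gn_order_def by (auto simp: less_imp_le)
    ultimately show ?thesis
      by blast
  qed
  ultimately show ?thesis
    unfolding is_causal_flow_def using partial_order_on_gn_order by blast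
qed

theorem theorem2:
  shows "(\<forall>(V :: 'a set) E Inp Out.
            geometry V E Inp Out \<and> has_causal_flow V E Inp Out \<longrightarrow>
            int (card (edge_set E)) \<le> int (card Out) * int (card V) - int (Suc (card Out) choose 2))
       \<and> (\<forall>(n :: nat) (k :: nat) (p :: nat \<Rightarrow> nat).
            k \<ge> 1 \<and> n \<ge> k \<and> (\<forall>i \<in> {1..k}. p i \<ge> 1) \<and>
            (\<forall>i \<in> {1..k}. \<forall>j \<in> {1..k}. i \<le> j \<longrightarrow> p i \<le> p j) \<and>
            (\<Sum>i = 1..k. p i) = n \<longrightarrow>
              geometry (gn_vertices k p) (gn_adj k p) (gn_inputs k) (gn_outputs k p) \<and>
              has_causal_flow (gn_vertices k p) (gn_adj k p) (gn_inputs k) (gn_outputs k p) \<and>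
              int (card (edge_set (gn_adj k p))) = int k * int n - int (Suc k choose 2))"
proof (intro conjI allI impI)
  fix V :: "'a set" and E Inp Out
  assume "geometry V E Inp Out \<and> has_causal_flow V E Inp Out"
  then obtain f R where "geometry V E Inp Out" "is_causal_flow V E Inp Out f R"
    unfolding has_causal_flow_def by blast
  then show "int (card (edge_set E)) \<le> int (card Out) * int (card V) - int (Suc (card Out) choose 2)"
    by (intro flow_graph_edge_bound causal_flow_imp_flow_graph)
next
  fix n k :: nat and p :: "nat \<Rightarrow> nat"
  assume "k \<ge> 1 \<and> n \<ge> k \<and> (\<forall>i \<in> {1..k}. p i \<ge> 1) \<and>
    (\<forall>i \<in> {1..k}. \<forall>j \<in> {1..k}. i \<le> j \<longrightarrow> p i \<le> p j) \<and> (\<Sum>i = 1..k. p i) = n"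
  then have mono: "mono_on {1..k} p" and pos: "\<And>i. i \<in> {1..k} \<Longrightarrow> 1 \<le> p i"
    and sum_p: "(\<Sum>i = 1..k. p i) = n"
    by (auto intro: mono_onI)
  show "geometry (gn_vertices k p) (gn_adj k p) (gn_inputs k) (gn_outputs k p)"
    using mono pos by (rule gn_geometry)
  show "has_causal_flow (gn_vertices k p) (gn_adj k p) (gn_inputs k) (gn_outputs k p)"
    unfolding has_causal_flow_def using gn_causal_flow by blast
  show "int (card (edge_set (gn_adj k p))) = int k * int n - int (Suc k choose 2)"
    by (simp only: card_edge_set_gn_adj card_gn_dir[OF mono pos] sum_gn_edge_counts[of k p, OF pos]
        sum_p)
qed

end
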